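(* Fix $K\ge1$ and $\alpha,\beta_1,\beta_2>0$. There exists a constant $C$ such that for all $n\ge2$ and every symmetric $0/1$ matrix $A$ of size $n\times n$ with zero diagonal, $$\max_{e\in\{1,\dots,K\}^n}\big|Q_B(e)-Q_{ML}(e)-Q_P(e)\big|\le\frac{C\log n}{n^2},$$ where $Q_P(e)=\frac1{n^2}\sum_{a:\,n_a(e)+\lfloor\alpha\rfloor\ge2}n_a(e)\log n_a(e)-\frac1n$. Consequently $\max_{e}|Q_B(e)-Q_{ML}(e)|=O(\log n/n)$.
   Context: For a labelling $e$: $n_a(e)=\#\{i:e_i=a\}$; $O_{ab}(e)=\sum_{i,j}A_{ij}1\{e_i=a,e_j=b\}$ for $a\ne b$, $O_{aa}(e)=\sum_{i<j}A_{ij}1\{e_i=e_j=a\}$; $n_{ab}(e)=n_a(e)n_b(e)$ for $a\ne b$, $n_{aa}(e)=\frac12n_a(e)(n_a(e)-1)$. Bayesian modularity: $Q_B(e)=\frac1{n^2}\sum_{1\le a\le b\le K}\log B\big(O_{ab}(e)+\beta_1,n_{ab}(e)-O_{ab}(e)+\beta_2\big)+\frac1{n^2}\sum_{a=1}^K\log\Gamma(n_a(e)+\alpha)$, $B$ the beta function. Likelihood modularity: $Q_{ML}(e)=\frac1{n^2}\sum_{1\le a\le b\le K}n_{ab}(e)\,\tau\big(O_{ab}(e)/n_{ab}(e)\big)$ with $\tau(x)=x\log x+(1-x)\log(1-x)$, $0\log0=0$, and terms with $n_{ab}(e)=0$ taken as $0$. *)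

theory Defs
  imports "HOL-Analysis.Analysis"
begin

definition labelling :: "nat \<Rightarrow> nat \<Rightarrow> (nat \<Rightarrow> nat) \<Rightarrow> bool" where
  "labelling K n e \<longleftrightarrow> (\<forall>i<n. e i \<in> {1..K})"

definition adj_matrix :: "nat \<Rightarrow> (nat \<Rightarrow> nat \<Rightarrow> real) \<Rightarrow> bool" where
  "adj_matrix n A \<longleftrightarrow> (\<forall>i<n. \<forall>j<n. A i j \<in> {0,1} \<and> A i j = A j i) \<and> (\<forall>i<n. A i i = 0)"

definition cnt :: "nat \<Rightarrow> (nat \<Rightarrow> nat) \<Rightarrow> nat \<Rightarrow> nat" where
  "cnt n e a = card {i. i < n \<and> e i = a}"

definition Ocnt :: "nat \<Rightarrow> (nat \<Rightarrow> nat \<Rightarrow> real) \<Rightarrow> (nat \<Rightarrow> nat) \<Rightarrow> nat \<Rightarrow> nat \<Rightarrow> real" where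
  "Ocnt n A e a b =
     (if a \<noteq> b then (\<Sum>i<n. \<Sum>j<n. if e i = a \<and> e j = b then A i j else 0)
      else (\<Sum>i<n. \<Sum>j<n. if i < j \<and> e i = a \<and> e j = a then A i j else 0))"

definition Ncnt :: "nat \<Rightarrow> (nat \<Rightarrow> nat) \<Rightarrow> nat \<Rightarrow> nat \<Rightarrow> real" where
  "Ncnt n e a b =
     (if a \<noteq> b then real (cnt n e a) * real (cnt n e b)
      else real (cnt n e a) * (real (cnt n e a) - 1) / 2)"

definition xlogx :: "real \<Rightarrow> real" where
  "xlogx x = (if x = 0 then 0 else x * ln x)"

definition tau :: "real \<Rightarrow> real" where
  "tau x = xlogx x + xlogx (1 - x)"

definition Q_B :: "nat \<Rightarrow> real \<Rightarrow> real \<Rightarrow> real \<Rightarrow> nat \<Rightarrow> (nat \<Rightarrow> nat \<Rightarrow> real) \<Rightarrow> (nat \<Rightarrow> nat) \<Rightarrow> real" where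
  "Q_B K \<alpha> \<beta>1 \<beta>2 n A e =
     (1 / (real n)^2) * (\<Sum>a\<in>{1..K}. \<Sum>b\<in>{a..K}.
         ln (Beta (Ocnt n A e a b + \<beta>1) (Ncnt n e a b - Ocnt n A e a b + \<beta>2)))
   + (1 / (real n)^2) * (\<Sum>a\<in>{1..K}. ln (Gamma (real (cnt n e a) + \<alpha>)))"

definition Q_ML :: "nat \<Rightarrow> nat \<Rightarrow> (nat \<Rightarrow> nat \<Rightarrow> real) \<Rightarrow> (nat \<Rightarrow> nat) \<Rightarrow> real" where
  "Q_ML K n A e =
     (1 / (real n)^2) * (\<Sum>a\<in>{1..K}. \<Sum>b\<in>{a..K}.
        (if Ncnt n e a b = 0 then 0
         else Ncnt n e a b * tau (Ocnt n A e a b / Ncnt n e a b)))"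

definition Q_P :: "nat \<Rightarrow> real \<Rightarrow> nat \<Rightarrow> (nat \<Rightarrow> nat) \<Rightarrow> real" where
  "Q_P K \<alpha> n e =
     (1 / (real n)^2) * (\<Sum>a\<in>{a\<in>{1..K}. real_of_int (int (cnt n e a) + \<lfloor>\<alpha>\<rfloor>) \<ge> 2}.
        real (cnt n e a) * ln (real (cnt n e a)))
     - 1 / real n"

end

theory Submission
  imports Defs
begin

text \<open>By the elementary Stirling bounds \<open>m log m - m + 1 \<le> log m! \<le> m log m - m + 1 + log m\<close>
  and monotonicity of \<open>\<Gamma>\<close>, \<open>log \<Gamma>(m + \<beta>) = m log m - m + O(log(m + 2))\<close> uniformly in \<open>m\<close>.
  Writing \<open>log B(x, y) = log \<Gamma>(x) + log \<Gamma>(y) - log \<Gamma>(x + y)\<close>, the linear terms cancel and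
  each Beta term of \<open>Q_B\<close> equals \<open>O log O + (N - O) log (N - O) - N log N = N \<tau>(O/N)\<close> up to
  \<open>O(log n)\<close>, since all counts are at most \<open>n\<^sup>2\<close>. The Gamma terms likewise give
  \<open>\<Sum>\<^sub>a n\<^sub>a log n\<^sub>a - n + O(K log n)\<close>, which is \<open>n\<^sup>2 Q_P\<close>: as \<open>\<alpha> > 0\<close>, the side condition
  in \<open>Q_P\<close> only drops blocks with \<open>n\<^sub>a \<le> 1\<close>, whose term vanishes. With only \<open>K(K + 3)/2\<close>
  terms the total error is \<open>O(log n)\<close>, and \<open>|Q_P| \<le> 3 log n / n\<close> gives the second bound.\<close>

lemma ln_bound_of_eventual_affine_ln_bound:
  fixes f :: "nat \<Rightarrow> real"
  assumes "\<And>m. m \<ge> m0 \<Longrightarrow> \<bar>f m\<bar> \<le> a + b * ln (real m + 2)"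
  shows "\<exists>c\<ge>0. \<forall>m. \<bar>f m\<bar> \<le> c * ln (real m + 2)"
proof -
  define S where "S = (\<Sum>k<m0. \<bar>f k\<bar>)"
  define c where "c = 2 * (S + \<bar>a\<bar>) + \<bar>b\<bar>"
  have S: "S \<ge> 0" unfolding S_def by (simp add: sum_nonneg)
  have "\<bar>f m\<bar> \<le> c * ln (real m + 2)" for m
  proof -
    define L where "L = ln (real m + 2)"
    have "ln 2 \<le> L" unfolding L_def by simp
    then have L: "1 \<le> 2 * L" using ln2_ge_two_thirds by linarith
    show ?thesis
    proof (cases "m < m0")
      case True
      then have "\<bar>f m\<bar> \<le> S" unfolding S_def by (intro member_le_sum) auto
      also have "S \<le> 2 * S * L" using mult_left_mono[OF L S] by simp
      also have "\<dots> \<le> c * L" unfolding c_def using L S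
        by (intro mult_right_mono) auto
      finally show ?thesis unfolding L_def .
    next
      case False
      then have "\<bar>f m\<bar> \<le> a + b * L" using assms unfolding L_def by simp
      also have "\<dots> \<le> \<bar>a\<bar> * (2 * L) + \<bar>b\<bar> * L"
        using mult_left_mono[OF L, of "\<bar>a\<bar>"] L by (intro add_mono) (auto intro: mult_right_mono)
      also have "\<dots> \<le> c * L" unfolding c_def using L S by (simp add: algebra_simps)
      finally show ?thesis unfolding L_def .
    qed
  qed
  moreover have "c \<ge> 0" unfolding c_def using S by simp
  ultimately show ?thesis by blast
qed

lemma ln_succ_diff_bounds:
  fixes x :: real assumes "x > 0"
  shows "1 / (x + 1) \<le> ln (x + 1) - ln x" and "ln (x + 1) - ln x \<le> 1 / x"
proof -
  have "ln (x / (x + 1)) \<le> x / (x + 1) - 1" using assms by (intro ln_le_minus_one) simp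
  then show "1 / (x + 1) \<le> ln (x + 1) - ln x" using assms by (simp add: ln_div field_simps)
  have "ln ((x + 1) / x) \<le> (x + 1) / x - 1" using assms by (intro ln_le_minus_one) simp
  then show "ln (x + 1) - ln x \<le> 1 / x" using assms by (simp add: ln_div field_simps)
qed

lemma ln_fact_bounds:
  fixes m :: nat assumes "m \<ge> 1"
  shows "real m * ln (real m) - real m + 1 \<le> ln (fact m)"
    and "ln (fact m) \<le> real m * ln (real m) - real m + 1 + ln (real m)"
proof -
  have "real m * ln (real m) - real m + 1 \<le> ln (fact m) \<and>
        ln (fact m) \<le> real m * ln (real m) - real m + 1 + ln (real m)"
    using assms
  proof (induction m rule: dec_induct)
    case (step m)
    have m: "real m > 0" using step.hyps by simp
    have "ln (fact (Suc m)) = ln (real m + 1) + ln (fact m)"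
      by (simp add: ln_mult add.commute)
    moreover have "1 \<le> (real m + 1) * (ln (real m + 1) - ln (real m))"
      using mult_left_mono[OF ln_succ_diff_bounds(1)[OF m], of "real m + 1"] m by simp
    moreover have "real m * (ln (real m + 1) - ln (real m)) \<le> 1"
      using mult_left_mono[OF ln_succ_diff_bounds(2)[OF m], of "real m"] m by simp
    ultimately show ?case using step.IH by (simp add: algebra_simps)
  qed simp
  then show "real m * ln (real m) - real m + 1 \<le> ln (fact m)"
    and "ln (fact m) \<le> real m * ln (real m) - real m + 1 + ln (real m)" by auto
qed

definition ln_Gamma_error :: "real \<Rightarrow> nat \<Rightarrow> real" where
  "ln_Gamma_error \<beta> m = ln (Gamma (real m + \<beta>)) - (xlogx (real m) - real m)"

text \<open>Monotonicity of \<open>\<Gamma>\<close> on \<open>[3/2, \<infinity>)\<close> sandwiches \<open>\<Gamma>(m + \<beta>)\<close> between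
  \<open>\<Gamma>(m) = (m - 1)!\<close> and \<open>\<Gamma>(m + j + 1) = (m + j)!\<close> for any \<open>j > \<beta> - 1\<close>.\<close>

lemma ln_Gamma_shift_lower:
  fixes m :: nat and \<beta> :: real
  assumes "m \<ge> 2" "\<beta> > 0"
  shows "xlogx (real m) - real m - ln (real m) \<le> ln (Gamma (real m + \<beta>))"
proof -
  have m: "real m > 0" using assms by simp
  have "Gamma (real m) < Gamma (real m + \<beta>)"
    using assms by (intro Gamma_real_strict_mono) auto
  moreover have "Gamma (real m) = fact (m - 1)"
    using Gamma_fact[of "m - 1", where 'a=real] assms by (simp add: of_nat_diff)
  ultimately have "ln (fact (m - 1)) \<le> ln (Gamma (real m + \<beta>))"
    by (metis fact_gt_zero less_imp_le ln_mono)
  moreover have "fact m = real m * fact (m - 1)"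
    using assms by (intro fact_reduce) simp
  then have "ln (fact m) = ln (real m) + ln (fact (m - 1))" using m by (simp add: ln_mult)
  moreover have "xlogx (real m) = real m * ln (real m)" by (simp add: xlogx_def)
  ultimately show ?thesis using ln_fact_bounds(1)[of m] assms by linarith
qed

lemma ln_Gamma_shift_upper:
  fixes m j :: nat and \<beta> :: real
  assumes "m \<ge> 2" "\<beta> > 0" "\<beta> < real j + 1"
  shows "ln (Gamma (real m + \<beta>)) \<le> xlogx (real m) - real m + (real j + 1) * ln (real m + real j) + 1"
proof -
  define M where "M = m + j"
  have m: "real m > 0" and M: "real M = real m + real j" using assms by (simp_all add: M_def)
  have "Gamma (real m + \<beta>) < Gamma (real M + 1)"
    using assms M by (intro Gamma_real_strict_mono) auto
  moreover have "Gamma (real M + 1) = fact M"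
    using Gamma_fact[of M, where 'a=real] by (simp add: add.commute)
  ultimately have "ln (Gamma (real m + \<beta>)) \<le> ln (fact M)"
    using assms by simp
  moreover have "ln (fact M) \<le> real M * ln (real M) - real M + 1 + ln (real M)"
    using ln_fact_bounds(2)[of M] assms by (simp add: M_def)
  moreover have "ln (real M / real m) \<le> real M / real m - 1"
    using m M by (intro ln_le_minus_one) simp
  then have "real m * (ln (real M) - ln (real m)) \<le> real j"
    using m M by (simp add: ln_div field_simps)
  ultimately show ?thesis using M m by (simp add: xlogx_def algebra_simps)
qed

lemma ln_Gamma_shift_bound:
  fixes \<beta> :: real assumes "\<beta> > 0"
  shows "\<exists>c\<ge>0. \<forall>m. \<bar>ln_Gamma_error \<beta> m\<bar> \<le> c * ln (real m + 2)"
proof (rule ln_bound_of_eventual_affine_ln_bound)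
  define j where "j = nat \<lfloor>\<beta>\<rfloor>"
  have j: "\<beta> < real j + 1" using assms unfolding j_def by (simp add: of_nat_nat)
  fix m :: nat assume m: "m \<ge> 2"
  have "ln (real m) \<le> ln (real m + 2)" using m by simp
  also have "\<dots> \<le> (real j + 1) * ln (real m + 2)"
    using mult_right_mono[of 1 "real j + 1" "ln (real m + 2)"] by simp
  finally have ln_m: "ln (real m) \<le> (real j + 1) * ln (real m + 2)" .
  have "ln (real m + real j) \<le> ln ((real m + 2) * (real j + 1))"
    using m by (intro ln_mono) (auto simp: algebra_simps)
  also have "\<dots> = ln (real m + 2) + ln (real j + 1)" by (simp add: ln_mult)
  finally have "(real j + 1) * ln (real m + real j)
      \<le> (real j + 1) * ln (real m + 2) + (real j + 1) * ln (real j + 1)"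
    by (simp add: mult_left_mono flip: distrib_left)
  moreover have "0 \<le> (real j + 1) * ln (real j + 1)" by simp
  ultimately show "\<bar>ln_Gamma_error \<beta> m\<bar>
      \<le> ((real j + 1) * ln (real j + 1) + 1) + (real j + 1) * ln (real m + 2)"
    using ln_m ln_Gamma_shift_lower[OF m assms] ln_Gamma_shift_upper[OF m assms j]
    unfolding ln_Gamma_error_def abs_le_iff by linarith
qed

lemma xlogx_div:
  assumes "N > 0" "x \<ge> 0"
  shows "N * xlogx (x / N) = xlogx x - x * ln N"
  using assms by (cases "x = 0") (simp_all add: xlogx_def ln_div right_diff_distrib)

lemma tau_scaled:
  fixes k N :: real assumes "0 \<le> k" "k \<le> N"
  shows "(if N = 0 then 0 else N * tau (k / N)) = xlogx k + xlogx (N - k) - xlogx N"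
proof (cases "N = 0")
  case True then show ?thesis using assms by (simp add: xlogx_def)
next
  case False
  then have N: "N > 0" using assms by simp
  have "1 - k / N = (N - k) / N" using N by (simp add: field_simps)
  then have "N * tau (k / N) = N * xlogx (k / N) + N * xlogx ((N - k) / N)"
    unfolding tau_def by (simp only: distrib_left)
  also have "\<dots> = (xlogx k - k * ln N) + (xlogx (N - k) - (N - k) * ln N)"
    using N assms by (simp add: xlogx_div)
  also have "\<dots> = xlogx k + xlogx (N - k) - N * ln N" by (simp add: algebra_simps)
  finally show ?thesis using N by (simp add: xlogx_def)
qed

lemma ln_Beta:
  fixes x y :: real assumes "x > 0" "y > 0"
  shows "ln (Beta x y) = ln (Gamma x) + ln (Gamma y) - ln (Gamma (x + y))"
proof -
  have "Gamma x > 0" "Gamma y > 0" "Gamma (x + y) > 0" using assms by simp_all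
  then show ?thesis by (simp add: Beta_def ln_div ln_mult)
qed

lemma ln_Beta_xlogx_bound:
  fixes \<beta>1 \<beta>2 :: real assumes "\<beta>1 > 0" "\<beta>2 > 0"
  shows "\<exists>c\<ge>0. \<forall>k l::nat.
     \<bar>ln (Beta (real k + \<beta>1) (real l + \<beta>2))
       - (xlogx (real k) + xlogx (real l) - xlogx (real k + real l))\<bar> \<le> c * ln (real k + real l + 2)"
proof -
  obtain c1 where c1: "c1 \<ge> 0" "\<And>m. \<bar>ln_Gamma_error \<beta>1 m\<bar> \<le> c1 * ln (real m + 2)"
    using ln_Gamma_shift_bound[OF assms(1)] by blast
  obtain c2 where c2: "c2 \<ge> 0" "\<And>m. \<bar>ln_Gamma_error \<beta>2 m\<bar> \<le> c2 * ln (real m + 2)"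
    using ln_Gamma_shift_bound[OF assms(2)] by blast
  obtain c3 where c3: "c3 \<ge> 0" "\<And>m. \<bar>ln_Gamma_error (\<beta>1 + \<beta>2) m\<bar> \<le> c3 * ln (real m + 2)"
    using ln_Gamma_shift_bound[of "\<beta>1 + \<beta>2"] assms by auto
  have "\<bar>ln (Beta (real k + \<beta>1) (real l + \<beta>2))
       - (xlogx (real k) + xlogx (real l) - xlogx (real k + real l))\<bar> \<le> (c1 + c2 + c3) * ln (real k + real l + 2)"
    for k l :: nat
  proof -
    have Beta: "ln (Beta (real k + \<beta>1) (real l + \<beta>2)) =
        ln (Gamma (real k + \<beta>1)) + ln (Gamma (real l + \<beta>2)) - ln (Gamma (real (k + l) + (\<beta>1 + \<beta>2)))"
      using ln_Beta[of "real k + \<beta>1" "real l + \<beta>2"] assms by (simp add: ac_simps)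
    have mono: "c1 * ln (real k + 2) \<le> c1 * ln (real k + real l + 2)"
      "c2 * ln (real l + 2) \<le> c2 * ln (real k + real l + 2)"
      using c1(1) c2(1) by (auto intro!: mult_left_mono)
    note G = c1(2)[of k] c2(2)[of l] c3(2)[of "k + l"]
    note G = G[unfolded ln_Gamma_error_def]
    show ?thesis
      unfolding distrib_right
      using Beta mono G[THEN abs_le_D1] G[THEN abs_le_D2] by (intro abs_leI) (simp_all add: add.assoc)
  qed
  then show ?thesis using c1(1) c2(1) c3(1) by (intro exI[of _ "c1 + c2 + c3"]) auto
qed

definition block_pair :: "(nat \<Rightarrow> nat) \<Rightarrow> nat \<Rightarrow> nat \<Rightarrow> nat \<Rightarrow> nat \<Rightarrow> bool" where
  "block_pair e a b i j \<longleftrightarrow> e i = a \<and> e j = b \<and> (a = b \<longrightarrow> i < j)"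

lemma cnt_eq_sum: "cnt n e a = (\<Sum>i<n. if e i = a then 1 else 0)"
proof -
  have "{i. i < n \<and> e i = a} = {..<n} \<inter> {i. e i = a}" by auto
  then show ?thesis unfolding cnt_def by (simp add: sum.If_cases)
qed

lemma cnt_le: "cnt n e a \<le> n"
  using card_mono[of "{..<n}" "{i. i < n \<and> e i = a}"] unfolding cnt_def by auto

lemma sum_cnt:
  assumes "labelling K n e"
  shows "(\<Sum>a\<in>{1..K}. cnt n e a) = n"
proof -
  have "(\<Sum>a\<in>{1..K}. cnt n e a) = (\<Sum>i<n. \<Sum>a\<in>{1..K}. if e i = a then 1 else 0)"
    unfolding cnt_eq_sum by (rule sum.swap)
  also have "\<dots> = (\<Sum>i<n. 1)"
    using assms unfolding labelling_def by (intro sum.cong) (auto simp: sum.delta')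
  finally show ?thesis by simp
qed

lemma pairs_in_block_sum:
  "(\<Sum>i<n. \<Sum>j<n. if e i = a \<and> e j = b then 1 else 0) = cnt n e a * cnt n e b"
  unfolding cnt_eq_sum sum_product by (intro sum.cong) auto

text \<open>Counting ordered pairs inside block \<open>a\<close> as pairs below, above and on the diagonal
  gives \<open>m\<^sup>2 = 2P + m\<close>, i.e.\ \<open>P = m(m-1)/2\<close>.\<close>
lemma Ncnt_eq_sum:
  "Ncnt n e a b = real (\<Sum>i<n. \<Sum>j<n. if block_pair e a b i j then 1 else 0)"
proof (cases "a = b")
  case False
  then show ?thesis
    using pairs_in_block_sum by (simp add: Ncnt_def block_pair_def flip: of_nat_mult)
next
  case True
  define m where "m = cnt n e a"
  define P where "P = (\<Sum>i<n. \<Sum>j<n. if block_pair e a a i j then 1 else 0::nat)"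
  have split: "(if e i = a \<and> e j = a then 1 else 0::nat) =
      (if block_pair e a a i j then 1 else 0) + (if block_pair e a a j i then 1 else 0)
      + (if i = j \<and> e i = a then 1 else 0)" for i j
    unfolding block_pair_def by (rule linorder_cases[of i j]) auto
  have "(\<Sum>i<n. \<Sum>j<n. if block_pair e a a j i then 1 else 0::nat) = P"
    unfolding P_def by (rule sum.swap)
  moreover have "(\<Sum>i<n. \<Sum>j<n. if i = j \<and> e i = a then 1 else 0::nat) = m"
    unfolding m_def cnt_eq_sum by (intro sum.cong) (auto simp: sum.delta)
  ultimately have "(\<Sum>i<n. \<Sum>j<n. if e i = a \<and> e j = a then 1 else 0) = P + P + m"
    unfolding split sum.distrib P_def by simp
  then have "m * m = P + P + m" by (simp add: m_def pairs_in_block_sum)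
  then have "real m * (real m - 1) / 2 = real P"
    by (simp add: field_simps flip: of_nat_mult of_nat_add)
  then show ?thesis using True by (simp add: Ncnt_def m_def P_def)
qed

lemma Ocnt_eq_sum:
  assumes "adj_matrix n A"
  shows "Ocnt n A e a b = real (\<Sum>i<n. \<Sum>j<n. if block_pair e a b i j \<and> A i j = 1 then 1 else 0)"
proof -
  have "Ocnt n A e a b = (\<Sum>i<n. \<Sum>j<n. if block_pair e a b i j then A i j else 0)"
    by (cases "a = b") (auto simp: Ocnt_def block_pair_def intro!: sum.cong)
  also have "\<dots> = (\<Sum>i<n. \<Sum>j<n. real (if block_pair e a b i j \<and> A i j = 1 then 1 else 0))"
    using assms unfolding adj_matrix_def by (intro sum.cong refl) auto
  finally show ?thesis by simp
qed

lemma Ocnt_Ncnt_nat: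
  assumes "adj_matrix n A"
  obtains k N :: nat where "Ocnt n A e a b = real k" "Ncnt n e a b = real N" "k \<le> N" "N \<le> n * n"
proof
  show "Ocnt n A e a b = real (\<Sum>i<n. \<Sum>j<n. if block_pair e a b i j \<and> A i j = 1 then 1 else 0)"
    by (rule Ocnt_eq_sum[OF assms])
  show "Ncnt n e a b = real (\<Sum>i<n. \<Sum>j<n. if block_pair e a b i j then 1 else 0)"
    by (rule Ncnt_eq_sum)
  show "(\<Sum>i<n. \<Sum>j<n. if block_pair e a b i j \<and> A i j = 1 then 1 else 0)
      \<le> (\<Sum>i<n. \<Sum>j<n. if block_pair e a b i j then 1 else 0::nat)"
    by (intro sum_mono) auto
  have "(\<Sum>j<n. if block_pair e a b i j then 1 else 0) \<le> n" for i
    using sum_bounded_above[of "{..<n}" "\<lambda>j. if block_pair e a b i j then 1 else 0::nat" 1] by simp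
  then show "(\<Sum>i<n. \<Sum>j<n. if block_pair e a b i j then 1 else 0) \<le> n * n"
    using sum_bounded_above[of "{..<n}" "\<lambda>i. \<Sum>j<n. if block_pair e a b i j then 1 else 0::nat" n]
    by simp
qed

lemma xlogx_of_nat: "xlogx (real m) = real m * ln (real m)"
  by (simp add: xlogx_def)

lemma Q_P_eq:
  assumes "\<alpha> \<ge> 0"
  shows "Q_P K \<alpha> n e = (\<Sum>a\<in>{1..K}. xlogx (real (cnt n e a))) / (real n)^2 - 1 / real n"
proof -
  let ?S = "{a\<in>{1..K}. real_of_int (int (cnt n e a) + \<lfloor>\<alpha>\<rfloor>) \<ge> 2}"
  have "xlogx (real (cnt n e a)) = 0" if "a \<in> {1..K} - ?S" for a
  proof -
    have "\<not> 2 \<le> real (cnt n e a) + real_of_int \<lfloor>\<alpha>\<rfloor>" using that by simp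
    moreover have "0 \<le> real_of_int \<lfloor>\<alpha>\<rfloor>" using assms by simp
    ultimately have "cnt n e a < 2" by linarith
    then show ?thesis by (auto simp: xlogx_def less_2_cases_iff)
  qed
  then have "(\<Sum>a\<in>?S. xlogx (real (cnt n e a))) = (\<Sum>a\<in>{1..K}. xlogx (real (cnt n e a)))"
    by (intro sum.mono_neutral_left) auto
  then show ?thesis unfolding Q_P_def xlogx_of_nat by simp
qed

definition block_error ::
    "real \<Rightarrow> real \<Rightarrow> nat \<Rightarrow> (nat \<Rightarrow> nat \<Rightarrow> real) \<Rightarrow> (nat \<Rightarrow> nat) \<Rightarrow> nat \<Rightarrow> nat \<Rightarrow> real" where
  "block_error \<beta>1 \<beta>2 n A e a b =
     ln (Beta (Ocnt n A e a b + \<beta>1) (Ncnt n e a b - Ocnt n A e a b + \<beta>2))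
     - (if Ncnt n e a b = 0 then 0 else Ncnt n e a b * tau (Ocnt n A e a b / Ncnt n e a b))"

lemma Q_B_minus_Q_ML_minus_Q_P:
  assumes "labelling K n e" "\<alpha> \<ge> 0" "n > 0"
  shows "(real n)^2 * (Q_B K \<alpha> \<beta>1 \<beta>2 n A e - Q_ML K n A e - Q_P K \<alpha> n e) =
    (\<Sum>a\<in>{1..K}. \<Sum>b\<in>{a..K}. block_error \<beta>1 \<beta>2 n A e a b)
    + (\<Sum>a\<in>{1..K}. ln_Gamma_error \<alpha> (cnt n e a))"
proof -
  have "(\<Sum>a\<in>{1..K}. real (cnt n e a)) = real n"
    using sum_cnt[OF assms(1)] by (simp flip: of_nat_sum)
  then show ?thesis
    using assms(3) unfolding Q_B_def Q_ML_def Q_P_eq[OF assms(2)] block_error_def ln_Gamma_error_def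
    by (simp add: sum_subtractf sum.distrib field_simps power2_eq_square)
qed

lemma ln_add_two_le:
  fixes n N k :: nat assumes "n \<ge> 2" "k \<ge> 1" "N \<le> n ^ k"
  shows "ln (real N + 2) \<le> (real k + 1) * ln (real n)"
proof -
  have "2 \<le> n ^ k" using assms power_increasing[of 1 k n] by simp
  then have "N + 2 \<le> 2 * n ^ k" using assms by simp
  also have "\<dots> \<le> n ^ Suc k" using assms by simp
  finally have "N + 2 \<le> n ^ Suc k" .
  then have "real N + 2 \<le> real n ^ Suc k"
    by (metis of_nat_add of_nat_le_iff of_nat_numeral of_nat_power)
  then have "ln (real N + 2) \<le> ln (real n ^ Suc k)" by (intro ln_mono) simp_all
  also have "\<dots> = (real k + 1) * ln (real n)" using assms by (subst ln_realpow) auto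
  finally show ?thesis .
qed

lemma block_error_bound:
  fixes \<beta>1 \<beta>2 :: real assumes "\<beta>1 > 0" "\<beta>2 > 0"
  shows "\<exists>c\<ge>0. \<forall>n A e a b. n \<ge> 2 \<longrightarrow> adj_matrix n A \<longrightarrow> \<bar>block_error \<beta>1 \<beta>2 n A e a b\<bar> \<le> c * ln (real n)"
proof -
  obtain c where c: "c \<ge> 0" "\<And>k l::nat.
     \<bar>ln (Beta (real k + \<beta>1) (real l + \<beta>2))
       - (xlogx (real k) + xlogx (real l) - xlogx (real k + real l))\<bar> \<le> c * ln (real k + real l + 2)"
    using ln_Beta_xlogx_bound[OF assms] by blast
  have "\<bar>block_error \<beta>1 \<beta>2 n A e a b\<bar> \<le> 3 * c * ln (real n)"
    if n: "n \<ge> 2" and adj: "adj_matrix n A" for n A e a b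
  proof -
    obtain k N where kN: "Ocnt n A e a b = real k" "Ncnt n e a b = real N" "k \<le> N" "N \<le> n * n"
      using Ocnt_Ncnt_nat[OF adj] .
    have N: "real N = real k + real (N - k)" using kN(3) by simp
    have "\<bar>ln (Beta (real k + \<beta>1) (real (N - k) + \<beta>2))
        - (xlogx (real k) + xlogx (real (N - k)) - xlogx (real N))\<bar> \<le> c * ln (real N + 2)"
      using c(2)[of k "N - k"] unfolding N by (simp add: add.assoc)
    also have "\<dots> \<le> c * (3 * ln (real n))"
      using ln_add_two_le[of n 2 N] n kN(4) c(1) by (intro mult_left_mono) (simp_all add: power2_eq_square)
    finally show ?thesis
      unfolding block_error_def kN tau_scaled[OF of_nat_0_le_iff of_nat_mono[OF kN(3)]] using kN(3)
      by (simp add: of_nat_diff mult.assoc)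
  qed
  then show ?thesis using c(1) by (intro exI[of _ "3 * c"]) auto
qed

lemma ln_Gamma_error_bound:
  fixes \<alpha> :: real assumes "\<alpha> > 0"
  shows "\<exists>c\<ge>0. \<forall>n m. n \<ge> 2 \<longrightarrow> m \<le> n \<longrightarrow> \<bar>ln_Gamma_error \<alpha> m\<bar> \<le> c * ln (real n)"
proof -
  obtain c where c: "c \<ge> 0" "\<And>m. \<bar>ln_Gamma_error \<alpha> m\<bar> \<le> c * ln (real m + 2)"
    using ln_Gamma_shift_bound[OF assms] by blast
  have "\<bar>ln_Gamma_error \<alpha> m\<bar> \<le> 2 * c * ln (real n)" if "n \<ge> 2" "m \<le> n" for n m
  proof -
    have "ln (real m + 2) \<le> 2 * ln (real n)" using ln_add_two_le[of n 1 m] that by simp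
    then show ?thesis using c(2)[of m] mult_left_mono[OF _ c(1)] by fastforce
  qed
  then show ?thesis using c(1) by (intro exI[of _ "2 * c"]) auto
qed

lemma abs_sum_le_card_mult:
  fixes f :: "'a \<Rightarrow> real"
  assumes "\<And>x. x \<in> I \<Longrightarrow> \<bar>f x\<bar> \<le> M"
  shows "\<bar>sum f I\<bar> \<le> real (card I) * M"
  using order_trans[OF sum_abs sum_bounded_above[of I "\<lambda>x. \<bar>f x\<bar>" M]] assms by simp

lemma abs_sum_upper_triangle_le:
  fixes f :: "nat \<Rightarrow> nat \<Rightarrow> real"
  assumes "\<And>a b. \<bar>f a b\<bar> \<le> M"
  shows "\<bar>\<Sum>a\<in>{1..K}. \<Sum>b\<in>{a..K}. f a b\<bar> \<le> real K * (real K * M)"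
proof -
  have "0 \<le> M" using assms[of 0 0] by linarith
  have "\<bar>\<Sum>b\<in>{a..K}. f a b\<bar> \<le> real K * M" if "a \<in> {1..K}" for a
  proof -
    have "\<bar>\<Sum>b\<in>{a..K}. f a b\<bar> \<le> real (card {a..K}) * M"
      by (intro abs_sum_le_card_mult assms)
    also have "\<dots> \<le> real K * M" using that \<open>0 \<le> M\<close> by (intro mult_right_mono) auto
    finally show ?thesis .
  qed
  then show ?thesis
    using abs_sum_le_card_mult[of "{1..K}" "\<lambda>a. \<Sum>b\<in>{a..K}. f a b" "real K * M"] by simp
qed

lemma Q_B_minus_Q_ML_minus_Q_P_bound:
  fixes K :: nat and \<alpha> \<beta>1 \<beta>2 :: real
  assumes "\<alpha> > 0" "\<beta>1 > 0" "\<beta>2 > 0"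
  shows "\<exists>C. \<forall>n A e. n \<ge> 2 \<longrightarrow> adj_matrix n A \<longrightarrow> labelling K n e \<longrightarrow>
     \<bar>Q_B K \<alpha> \<beta>1 \<beta>2 n A e - Q_ML K n A e - Q_P K \<alpha> n e\<bar> \<le> C * ln (real n) / (real n)^2"
proof -
  obtain cB where cB: "\<And>n A e a b. n \<ge> 2 \<Longrightarrow> adj_matrix n A \<Longrightarrow>
      \<bar>block_error \<beta>1 \<beta>2 n A e a b\<bar> \<le> cB * ln (real n)"
    using block_error_bound[OF assms(2,3)] by blast
  obtain cG where cG: "\<And>n m. n \<ge> 2 \<Longrightarrow> m \<le> n \<Longrightarrow> \<bar>ln_Gamma_error \<alpha> m\<bar> \<le> cG * ln (real n)"
    using ln_Gamma_error_bound[OF assms(1)] by blast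
  have "\<bar>Q_B K \<alpha> \<beta>1 \<beta>2 n A e - Q_ML K n A e - Q_P K \<alpha> n e\<bar>
      \<le> (real K * real K * cB + real K * cG) * ln (real n) / (real n)^2"
    if n: "n \<ge> 2" and adj: "adj_matrix n A" and lab: "labelling K n e" for n A e
  proof -
    have n0: "n > 0" using n by simp
    have "\<bar>\<Sum>a\<in>{1..K}. \<Sum>b\<in>{a..K}. block_error \<beta>1 \<beta>2 n A e a b\<bar> \<le> real K * (real K * (cB * ln (real n)))"
      by (intro abs_sum_upper_triangle_le cB[OF n adj])
    moreover have "\<bar>\<Sum>a\<in>{1..K}. ln_Gamma_error \<alpha> (cnt n e a)\<bar> \<le> real K * (cG * ln (real n))"
      using abs_sum_le_card_mult[of "{1..K}"] cG[OF n cnt_le] by simp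
    ultimately have "\<bar>(real n)^2 * (Q_B K \<alpha> \<beta>1 \<beta>2 n A e - Q_ML K n A e - Q_P K \<alpha> n e)\<bar>
        \<le> real K * (real K * (cB * ln (real n))) + real K * (cG * ln (real n))"
      unfolding Q_B_minus_Q_ML_minus_Q_P[OF lab less_imp_le[OF assms(1)] n0]
      by (intro order_trans[OF abs_triangle_ineq] add_mono)
    then have "\<bar>Q_B K \<alpha> \<beta>1 \<beta>2 n A e - Q_ML K n A e - Q_P K \<alpha> n e\<bar> * (real n)^2
        \<le> (real K * real K * cB + real K * cG) * ln (real n)"
      unfolding abs_mult by (simp add: algebra_simps)
    then show ?thesis using n0 by (simp add: pos_le_divide_eq)
  qed
  then show ?thesis by blast
qed

lemma abs_Q_P_le:
  assumes "labelling K n e" "n \<ge> 2" "\<alpha> \<ge> 0"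
  shows "\<bar>Q_P K \<alpha> n e\<bar> \<le> 3 * ln (real n) / real n"
proof -
  define T where "T = (\<Sum>a\<in>{1..K}. xlogx (real (cnt n e a)))"
  have n: "real n > 0" using assms(2) by simp
  have "ln (real m) \<le> ln (real n)" if "m \<le> n" for m
    using that n by (cases "m = 0") auto
  then have "T \<le> (\<Sum>a\<in>{1..K}. real (cnt n e a) * ln (real n))"
    unfolding T_def xlogx_of_nat by (intro sum_mono mult_left_mono) (simp_all add: cnt_le)
  also have "\<dots> = real n * ln (real n)"
    using sum_cnt[OF assms(1)] by (simp flip: sum_distrib_right of_nat_sum)
  finally have "T / (real n)^2 \<le> ln (real n) / real n"
    using n by (simp add: field_simps power2_eq_square)
  moreover have "0 \<le> real m * ln (real m)" for m by (cases m) auto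
  then have "0 \<le> T / (real n)^2" unfolding T_def xlogx_of_nat by (intro divide_nonneg_pos sum_nonneg) (use n in simp_all)
  moreover have "ln 2 \<le> ln (real n)" using assms(2) by simp
  then have "1 \<le> 2 * ln (real n)" using ln2_ge_two_thirds by linarith
  then have "1 / real n \<le> 2 * ln (real n) / real n" using n by (intro divide_right_mono) auto
  moreover have "0 \<le> 1 / real n" using n by simp
  moreover have "3 * ln (real n) / real n = ln (real n) / real n + 2 * ln (real n) / real n"
    by (simp add: field_simps)
  ultimately show ?thesis
    unfolding Q_P_eq[OF assms(3)] T_def[symmetric] abs_le_iff by (intro conjI) linarith+
qed

theorem lemma3p1:
  fixes K :: nat and \<alpha> \<beta>1 \<beta>2 :: real
  assumes "K \<ge> 1" and "\<alpha> > 0" and "\<beta>1 > 0" and "\<beta>2 > 0"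
  shows "(\<exists>C::real. \<forall>n::nat. \<forall>A. n \<ge> 2 \<longrightarrow> adj_matrix n A \<longrightarrow>
            (\<forall>e. labelling K n e \<longrightarrow>
               \<bar>Q_B K \<alpha> \<beta>1 \<beta>2 n A e - Q_ML K n A e - Q_P K \<alpha> n e\<bar>
                 \<le> C * ln (real n) / (real n)^2))
       \<and> (\<exists>C::real. \<forall>n::nat. \<forall>A. n \<ge> 2 \<longrightarrow> adj_matrix n A \<longrightarrow>
            (\<forall>e. labelling K n e \<longrightarrow>
               \<bar>Q_B K \<alpha> \<beta>1 \<beta>2 n A e - Q_ML K n A e\<bar> \<le> C * ln (real n) / real n))"
proof -
  obtain C where C: "\<And>n A e. n \<ge> 2 \<Longrightarrow> adj_matrix n A \<Longrightarrow> labelling K n e \<Longrightarrow>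
      \<bar>Q_B K \<alpha> \<beta>1 \<beta>2 n A e - Q_ML K n A e - Q_P K \<alpha> n e\<bar> \<le> C * ln (real n) / (real n)^2"
    using Q_B_minus_Q_ML_minus_Q_P_bound[OF assms(2-4)] by blast
  have "\<bar>Q_B K \<alpha> \<beta>1 \<beta>2 n A e - Q_ML K n A e\<bar> \<le> (\<bar>C\<bar> + 3) * ln (real n) / real n"
    if n: "n \<ge> 2" and adj: "adj_matrix n A" and lab: "labelling K n e" for n A e
  proof -
    have "C * ln (real n) / (real n)^2 \<le> \<bar>C\<bar> * ln (real n) / (real n)^2"
      using n by (intro divide_right_mono mult_right_mono) auto
    also have "\<dots> \<le> \<bar>C\<bar> * ln (real n) / real n"
      using n by (intro divide_left_mono) (auto simp: power2_eq_square)
    finally show ?thesis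
      using C[OF n adj lab] abs_Q_P_le[OF lab n less_imp_le[OF assms(2)]]
      by (simp add: add_divide_distrib distrib_right)
  qed
  then show ?thesis using C by blast
qed
end
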